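(* Let $\hat{Y}$, $\hat{A}$, $A$ be random variables on a common probability space, where $\hat{Y}$ takes values in a finite set $\mathcal{Y}$ and $A,\hat{A}$ take values in a common finite set $\mathcal{A}$. Identify values with their one-hot vectors, use the $\ell_p$-norm ($p\ge1$) as ground metric, and for pairs use the $\ell_p$-norm of the concatenated one-hot vectors. Then $$I_W(\hat{Y},A)\le I_W(\hat{Y},\hat{A})+2\sqrt[p]{2}\,\mathbb{P}(A\neq\hat{A}).$$
   Context: For random variables $U,V$, the Wasserstein Dependency Measure is $I_W(U,V)=W_1(p(U,V),p(U)p(V))$, where $W_1$ is the 1-Wasserstein distance with respect to the ground metric, $p(U,V)$ the joint law and $p(U)p(V)$ the product of the marginals. Interpretation: $\hat{Y}$ is a predicted label, $A$ a true sensitive attribute, $\hat{A}$ a predicted sensitive attribute. *)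

theory Defs
  imports "HOL-Probability.Probability"
begin

definition onehot :: "'x \<Rightarrow> 'x \<Rightarrow> real" where
  "onehot x = (\<lambda>z. if z = x then 1 else 0)"

definition lp_norm :: "real \<Rightarrow> ('i::finite \<Rightarrow> real) \<Rightarrow> real" where
  "lp_norm p v = (\<Sum>i\<in>UNIV. \<bar>v i\<bar> powr p) powr (1 / p)"

definition lp_dist :: "real \<Rightarrow> ('i::finite \<Rightarrow> real) \<Rightarrow> ('i \<Rightarrow> real) \<Rightarrow> real" where
  "lp_dist p u v = lp_norm p (\<lambda>i. u i - v i)"

definition concat_vec :: "('i \<Rightarrow> real) \<Rightarrow> ('j \<Rightarrow> real) \<Rightarrow> ('i + 'j \<Rightarrow> real)" where
  "concat_vec u v = case_sum u v"

definition pair_dist :: "real \<Rightarrow> ('y::finite \<times> 'a::finite) \<Rightarrow> ('y \<times> 'a) \<Rightarrow> real" where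
  "pair_dist p z z' =
     lp_dist p (concat_vec (onehot (fst z)) (onehot (snd z)))
               (concat_vec (onehot (fst z')) (onehot (snd z')))"

definition couplings :: "('x::finite \<Rightarrow> real) \<Rightarrow> ('x \<Rightarrow> real) \<Rightarrow> ('x \<times> 'x \<Rightarrow> real) set" where
  "couplings P Q = {\<gamma>. (\<forall>z. 0 \<le> \<gamma> z) \<and> (\<forall>x. (\<Sum>x'\<in>UNIV. \<gamma> (x, x')) = P x)
                        \<and> (\<forall>x'. (\<Sum>x\<in>UNIV. \<gamma> (x, x')) = Q x')}"

definition W1 :: "('x::finite \<Rightarrow> 'x \<Rightarrow> real) \<Rightarrow> ('x \<Rightarrow> real) \<Rightarrow> ('x \<Rightarrow> real) \<Rightarrow> real" where
  "W1 d P Q = Inf ((\<lambda>\<gamma>. \<Sum>z\<in>UNIV. \<gamma> z * d (fst z) (snd z)) ` couplings P Q)"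

definition joint_law :: "'w measure \<Rightarrow> ('w \<Rightarrow> 'u) \<Rightarrow> ('w \<Rightarrow> 'v) \<Rightarrow> ('u \<times> 'v \<Rightarrow> real)" where
  "joint_law M U V = (\<lambda>(u, v). measure M {w \<in> space M. U w = u \<and> V w = v})"

definition prod_marginals :: "'w measure \<Rightarrow> ('w \<Rightarrow> 'u) \<Rightarrow> ('w \<Rightarrow> 'v) \<Rightarrow> ('u \<times> 'v \<Rightarrow> real)" where
  "prod_marginals M U V =
     (\<lambda>(u, v). measure M {w \<in> space M. U w = u} * measure M {w \<in> space M. V w = v})"

definition IW :: "real \<Rightarrow> 'w measure \<Rightarrow> ('w \<Rightarrow> 'y::finite) \<Rightarrow> ('w \<Rightarrow> 'a::finite) \<Rightarrow> real" where
  "IW p M U V = W1 (pair_dist p) (joint_law M U V) (prod_marginals M U V)"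

end

theory Submission
  imports Defs
begin

(* By the triangle inequality for W1, I_W(Yh, A) = W1(P_(Yh,A), P_Yh \<otimes> P_A) is bounded along the
   chain P_(Yh,A), P_(Yh,Ah), P_Yh \<otimes> P_Ah, P_Yh \<otimes> P_A, whose middle step is I_W(Yh, Ah).
   Each outer step is at most the expected ground distance of a coupling realised by random
   variables: (Yh, A) against (Yh, Ah) on M, and (Yh w, A w') against (Yh w, Ah w') on M \<otimes> M.
   In both the first coordinates agree, so the ground distance is 2^(1/p) exactly when A and Ah
   disagree, an event of probability P(A \<noteq> Ah). *)

lemma sum_UNIV_prod:
  "(\<Sum>z\<in>UNIV. f z) = (\<Sum>x\<in>UNIV. \<Sum>y\<in>UNIV. f (x, y))"
  for f :: "'a::finite \<times> 'b::finite \<Rightarrow> 'c::comm_monoid_add"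
  by (simp add: sum.cartesian_product flip: UNIV_Times_UNIV)

definition transport_cost :: "('x::finite \<Rightarrow> 'x \<Rightarrow> real) \<Rightarrow> ('x \<times> 'x \<Rightarrow> real) \<Rightarrow> real" where
  "transport_cost d \<gamma> = (\<Sum>z\<in>UNIV. \<gamma> z * d (fst z) (snd z))"

lemma W1_le_transport_cost:
  assumes "\<gamma> \<in> couplings P Q" and "\<And>x y. 0 \<le> d x y"
  shows "W1 d P Q \<le> transport_cost d \<gamma>"
  unfolding W1_def transport_cost_def
proof (rule cInf_lower)
  show "bdd_below ((\<lambda>\<gamma>. \<Sum>z\<in>UNIV. \<gamma> z * d (fst z) (snd z)) ` couplings P Q)"
    by (rule bdd_belowI[where m = 0]) (auto simp: couplings_def intro!: sum_nonneg mult_nonneg_nonneg assms(2))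
qed (use assms(1) in blast)

lemma W1_greatest:
  assumes "couplings P Q \<noteq> {}" and "\<And>\<gamma>. \<gamma> \<in> couplings P Q \<Longrightarrow> b \<le> transport_cost d \<gamma>"
  shows "b \<le> W1 d P Q"
  unfolding W1_def using assms by (intro cInf_greatest) (auto simp: transport_cost_def)

lemma product_in_couplings:
  assumes "\<And>x. 0 \<le> P x" "\<And>x. 0 \<le> Q x" "sum P UNIV = 1" "sum Q UNIV = 1"
  shows "(\<lambda>(x, x'). P x * Q x') \<in> couplings P Q"
  using assms by (auto simp: couplings_def simp flip: sum_distrib_left sum_distrib_right)

lemma coupling_eq_0_if_left_marginal_0:
  assumes "\<gamma> \<in> couplings P Q" "P x = 0"
  shows "\<gamma> (x, y) = 0"
  using assms sum_nonneg_eq_0_iff[of UNIV "\<lambda>y. \<gamma> (x, y)"] by (auto simp: couplings_def)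

lemma coupling_eq_0_if_right_marginal_0:
  assumes "\<gamma> \<in> couplings P Q" "Q y = 0"
  shows "\<gamma> (x, y) = 0"
  using assms sum_nonneg_eq_0_iff[of UNIV "\<lambda>x. \<gamma> (x, y)"] by (auto simp: couplings_def)

(* Gluing along the common marginal Q: given the middle point y, x and z are drawn independently. *)
definition glue :: "('x::finite \<Rightarrow> real) \<Rightarrow> ('x \<times> 'x \<Rightarrow> real) \<Rightarrow> ('x \<times> 'x \<Rightarrow> real) \<Rightarrow> 'x \<Rightarrow> 'x \<Rightarrow> 'x \<Rightarrow> real"
  where "glue Q \<gamma>\<^sub>1 \<gamma>\<^sub>2 x y z = (if Q y = 0 then 0 else \<gamma>\<^sub>1 (x, y) * \<gamma>\<^sub>2 (y, z) / Q y)"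

context
  fixes P Q R :: "'x::finite \<Rightarrow> real" and \<gamma>\<^sub>1 \<gamma>\<^sub>2 :: "'x \<times> 'x \<Rightarrow> real"
  assumes \<gamma>\<^sub>1: "\<gamma>\<^sub>1 \<in> couplings P Q" and \<gamma>\<^sub>2: "\<gamma>\<^sub>2 \<in> couplings Q R"
begin

lemma glue_nonneg: "0 \<le> glue Q \<gamma>\<^sub>1 \<gamma>\<^sub>2 x y z"
proof -
  have "0 \<le> Q y"
    using \<gamma>\<^sub>2 unfolding couplings_def by (metis (mono_tags, lifting) mem_Collect_eq sum_nonneg)
  then show ?thesis
    using \<gamma>\<^sub>1 \<gamma>\<^sub>2 by (auto simp: glue_def couplings_def)
qed

lemma sum_glue_right: "(\<Sum>z\<in>UNIV. glue Q \<gamma>\<^sub>1 \<gamma>\<^sub>2 x y z) = \<gamma>\<^sub>1 (x, y)"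
proof (cases "Q y = 0")
  case False
  then show ?thesis
    using \<gamma>\<^sub>2 by (simp add: glue_def couplings_def flip: sum_distrib_left sum_divide_distrib)
qed (simp add: glue_def coupling_eq_0_if_right_marginal_0[OF \<gamma>\<^sub>1])

lemma sum_glue_left: "(\<Sum>x\<in>UNIV. glue Q \<gamma>\<^sub>1 \<gamma>\<^sub>2 x y z) = \<gamma>\<^sub>2 (y, z)"
proof (cases "Q y = 0")
  case False
  then show ?thesis
    using \<gamma>\<^sub>1 by (simp add: glue_def couplings_def flip: sum_distrib_right sum_divide_distrib)
qed (simp add: glue_def coupling_eq_0_if_left_marginal_0[OF \<gamma>\<^sub>2])

lemma glue_in_couplings: "(\<lambda>(x, z). \<Sum>y\<in>UNIV. glue Q \<gamma>\<^sub>1 \<gamma>\<^sub>2 x y z) \<in> couplings P R"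
proof -
  have "(\<Sum>z\<in>UNIV. \<Sum>y\<in>UNIV. glue Q \<gamma>\<^sub>1 \<gamma>\<^sub>2 x y z) = P x" for x
    using \<gamma>\<^sub>1 by (subst sum.swap) (simp add: sum_glue_right couplings_def)
  moreover have "(\<Sum>x\<in>UNIV. \<Sum>y\<in>UNIV. glue Q \<gamma>\<^sub>1 \<gamma>\<^sub>2 x y z) = R z" for z
    using \<gamma>\<^sub>2 by (subst sum.swap) (simp add: sum_glue_left couplings_def)
  ultimately show ?thesis
    by (auto simp: couplings_def intro: sum_nonneg glue_nonneg)
qed

lemma transport_cost_glue_le:
  assumes nonneg: "\<And>x y. 0 \<le> d x y" and triangle: "\<And>x y z. d x z \<le> d x y + d y z"
  shows "transport_cost d (\<lambda>(x, z). \<Sum>y\<in>UNIV. glue Q \<gamma>\<^sub>1 \<gamma>\<^sub>2 x y z)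
           \<le> transport_cost d \<gamma>\<^sub>1 + transport_cost d \<gamma>\<^sub>2"
proof -
  let ?g = "glue Q \<gamma>\<^sub>1 \<gamma>\<^sub>2"
  have cost\<^sub>1: "(\<Sum>x\<in>UNIV. \<Sum>y\<in>UNIV. \<Sum>z\<in>UNIV. ?g x y z * d x y) = transport_cost d \<gamma>\<^sub>1"
    by (simp add: transport_cost_def sum_UNIV_prod sum_glue_right flip: sum_distrib_right)
  have "(\<Sum>x\<in>UNIV. \<Sum>y\<in>UNIV. \<Sum>z\<in>UNIV. ?g x y z * d y z)
      = (\<Sum>y\<in>UNIV. \<Sum>z\<in>UNIV. \<Sum>x\<in>UNIV. ?g x y z * d y z)"
    by (subst sum.swap) (simp only: sum.swap[of "\<lambda>x z. _ x z * d _ z"])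
  then have cost\<^sub>2: "(\<Sum>x\<in>UNIV. \<Sum>y\<in>UNIV. \<Sum>z\<in>UNIV. ?g x y z * d y z) = transport_cost d \<gamma>\<^sub>2"
    by (simp add: transport_cost_def sum_UNIV_prod sum_glue_left flip: sum_distrib_right)
  have "transport_cost d (\<lambda>(x, z). \<Sum>y\<in>UNIV. ?g x y z)
      = (\<Sum>x\<in>UNIV. \<Sum>z\<in>UNIV. \<Sum>y\<in>UNIV. ?g x y z * d x z)"
    by (simp add: transport_cost_def sum_UNIV_prod sum_distrib_right)
  also have "\<dots> = (\<Sum>x\<in>UNIV. \<Sum>y\<in>UNIV. \<Sum>z\<in>UNIV. ?g x y z * d x z)"
    by (intro sum.cong refl sum.swap)
  also have "\<dots> \<le> (\<Sum>x\<in>UNIV. \<Sum>y\<in>UNIV. \<Sum>z\<in>UNIV. ?g x y z * d x y + ?g x y z * d y z)"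
    by (intro sum_mono) (metis distrib_left glue_nonneg mult_left_mono triangle)
  also have "\<dots> = transport_cost d \<gamma>\<^sub>1 + transport_cost d \<gamma>\<^sub>2"
    by (simp only: sum.distrib cost\<^sub>1 cost\<^sub>2)
  finally show ?thesis .
qed

end

lemma W1_triangle:
  assumes "couplings P Q \<noteq> {}" "couplings Q R \<noteq> {}"
    and nonneg: "\<And>x y. 0 \<le> d x y" and triangle: "\<And>x y z. d x z \<le> d x y + d y z"
  shows "W1 d P R \<le> W1 d P Q + W1 d Q R"
proof -
  have glued: "W1 d P R \<le> transport_cost d \<gamma>\<^sub>1 + transport_cost d \<gamma>\<^sub>2"
    if "\<gamma>\<^sub>1 \<in> couplings P Q" "\<gamma>\<^sub>2 \<in> couplings Q R" for \<gamma>\<^sub>1 \<gamma>\<^sub>2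
    using W1_le_transport_cost[where d = d, OF glue_in_couplings[OF that] nonneg]
      transport_cost_glue_le[where d = d, OF that nonneg triangle] by linarith
  have "W1 d P R - transport_cost d \<gamma>\<^sub>2 \<le> W1 d P Q" if "\<gamma>\<^sub>2 \<in> couplings Q R" for \<gamma>\<^sub>2
    using glued[OF _ that] by (intro W1_greatest[OF assms(1)]) (auto simp: algebra_simps)
  then have "W1 d P R - W1 d P Q \<le> W1 d Q R"
    by (intro W1_greatest[OF assms(2)]) (auto simp: algebra_simps)
  then show ?thesis by simp
qed

definition law :: "'w measure \<Rightarrow> ('w \<Rightarrow> 'x) \<Rightarrow> 'x \<Rightarrow> real" where
  "law N X x = measure N {w \<in> space N. X w = x}"

lemma sets_fibre:
  assumes "X \<in> N \<rightarrow>\<^sub>M count_space UNIV"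
  shows "{w \<in> space N. X w = x} \<in> sets N"
  using measurable_sets[OF assms, of "{x}"] by (simp add: vimage_def Int_def conj_commute)

lemma measurable_Pair_count_space:
  fixes X :: "'w \<Rightarrow> 'x::countable" and Y :: "'w \<Rightarrow> 'y::countable"
  assumes "X \<in> N \<rightarrow>\<^sub>M count_space UNIV" "Y \<in> N \<rightarrow>\<^sub>M count_space UNIV"
  shows "(\<lambda>w. (X w, Y w)) \<in> N \<rightarrow>\<^sub>M count_space UNIV"
  using measurable_Pair[OF assms] by (simp add: pair_measure_countable)

lemma (in finite_measure) sum_measure_fibres:
  fixes X :: "'a \<Rightarrow> 'x::finite"
  assumes "X \<in> M \<rightarrow>\<^sub>M count_space UNIV" "{w \<in> space M. P w} \<in> sets M"
  shows "(\<Sum>x\<in>UNIV. measure M {w \<in> space M. P w \<and> X w = x}) = measure M {w \<in> space M. P w}"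
proof -
  have "{w \<in> space M. P w \<and> X w = x} = {w \<in> space M. P w} \<inter> {w \<in> space M. X w = x}" for x
    by auto
  then have "measure M (\<Union>x. {w \<in> space M. P w \<and> X w = x}) = (\<Sum>x\<in>UNIV. measure M {w \<in> space M. P w \<and> X w = x})"
    using assms sets_fibre[OF assms(1)]
    by (intro finite_measure_finite_Union) (auto simp: disjoint_family_on_def)
  moreover have "(\<Union>x. {w \<in> space M. P w \<and> X w = x}) = {w \<in> space M. P w}"
    by auto
  ultimately show ?thesis by simp
qed

lemma (in prob_space) sum_law:
  fixes X :: "'a \<Rightarrow> 'x::finite"
  assumes "X \<in> M \<rightarrow>\<^sub>M count_space UNIV"
  shows "sum (law M X) UNIV = 1"
  using sum_measure_fibres[OF assms, of "\<lambda>_. True"] by (simp add: law_def prob_space)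

lemma couplings_law_nonempty:
  fixes X :: "'w \<Rightarrow> 'x::finite" and X' :: "'w' \<Rightarrow> 'x"
  assumes "prob_space N" "X \<in> N \<rightarrow>\<^sub>M count_space UNIV"
    and "prob_space N'" "X' \<in> N' \<rightarrow>\<^sub>M count_space UNIV"
  shows "couplings (law N X) (law N' X') \<noteq> {}"
  using product_in_couplings[of "law N X" "law N' X'"] prob_space.sum_law[OF assms(1,2)]
    prob_space.sum_law[OF assms(3,4)] by (auto simp: law_def)

lemma W1_law_triangle:
  fixes X\<^sub>1 :: "'w\<^sub>1 \<Rightarrow> 'x::finite" and X\<^sub>2 :: "'w\<^sub>2 \<Rightarrow> 'x" and X\<^sub>3 :: "'w\<^sub>3 \<Rightarrow> 'x"
  assumes "prob_space N\<^sub>1" "X\<^sub>1 \<in> N\<^sub>1 \<rightarrow>\<^sub>M count_space UNIV"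
    and "prob_space N\<^sub>2" "X\<^sub>2 \<in> N\<^sub>2 \<rightarrow>\<^sub>M count_space UNIV"
    and "prob_space N\<^sub>3" "X\<^sub>3 \<in> N\<^sub>3 \<rightarrow>\<^sub>M count_space UNIV"
    and "\<And>x y. 0 \<le> d x y" "\<And>x y z. d x z \<le> d x y + d y z"
  shows "W1 d (law N\<^sub>1 X\<^sub>1) (law N\<^sub>3 X\<^sub>3) \<le> W1 d (law N\<^sub>1 X\<^sub>1) (law N\<^sub>2 X\<^sub>2) + W1 d (law N\<^sub>2 X\<^sub>2) (law N\<^sub>3 X\<^sub>3)"
  by (intro W1_triangle couplings_law_nonempty assms)

lemma (in finite_measure) law_Pair_in_couplings:
  fixes X X' :: "'a \<Rightarrow> 'x::finite"
  assumes "X \<in> M \<rightarrow>\<^sub>M count_space UNIV" "X' \<in> M \<rightarrow>\<^sub>M count_space UNIV"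
  shows "law M (\<lambda>w. (X w, X' w)) \<in> couplings (law M X) (law M X')"
  using sum_measure_fibres[OF assms(2) sets_fibre[OF assms(1)]]
    sum_measure_fibres[OF assms(1) sets_fibre[OF assms(2)]]
  by (auto simp: couplings_def law_def conj_commute)

lemma (in finite_measure) integral_finite_valued:
  fixes Z :: "'a \<Rightarrow> 'x::finite" and g :: "'x \<Rightarrow> real"
  assumes "Z \<in> M \<rightarrow>\<^sub>M count_space UNIV"
  shows "(\<integral>w. g (Z w) \<partial>M) = (\<Sum>z\<in>UNIV. law M Z z * g z)"
proof -
  have "(\<integral>w. g (Z w) \<partial>M) = (\<integral>w. (\<Sum>z\<in>UNIV. g z * indicator {w \<in> space M. Z w = z} w) \<partial>M)"
    by (intro Bochner_Integration.integral_cong) (auto simp: indicator_def)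
  also have "\<dots> = (\<Sum>z\<in>UNIV. law M Z z * g z)"
    using sets_fibre[OF assms]
    by (subst Bochner_Integration.integral_sum)
       (auto simp: law_def Int_absorb2 integrable_indicator_iff mult.commute less_top[symmetric]
             simp del: sum_mult_indicator)
  finally show ?thesis .
qed

lemma (in finite_measure) W1_law_le_integral:
  fixes X X' :: "'a \<Rightarrow> 'x::finite"
  assumes "X \<in> M \<rightarrow>\<^sub>M count_space UNIV" "X' \<in> M \<rightarrow>\<^sub>M count_space UNIV" "\<And>x y. 0 \<le> d x y"
  shows "W1 d (law M X) (law M X') \<le> (\<integral>w. d (X w) (X' w) \<partial>M)"
  using W1_le_transport_cost[OF law_Pair_in_couplings[OF assms(1,2)] assms(3)]
    integral_finite_valued[OF measurable_Pair_count_space[OF assms(1,2)], of "\<lambda>z. d (fst z) (snd z)"]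
  by (simp add: transport_cost_def)

lemma joint_law_eq_law: "joint_law M U V = law M (\<lambda>w. (U w, V w))"
  by (auto simp: joint_law_def law_def)

lemma (in finite_measure) W1_law_le_measure:
  fixes X X' :: "'a \<Rightarrow> 'x::finite"
  assumes "X \<in> M \<rightarrow>\<^sub>M count_space UNIV" "X' \<in> M \<rightarrow>\<^sub>M count_space UNIV" "\<And>x y. 0 \<le> d x y"
    and "E \<in> sets M" "\<And>w. w \<in> space M \<Longrightarrow> d (X w) (X' w) = c * indicator E w"
  shows "W1 d (law M X) (law M X') \<le> c * measure M E"
proof -
  have "(\<integral>w. d (X w) (X' w) \<partial>M) = c * measure M E"
    using assms(4,5) sets.sets_into_space[OF assms(4)]
    by (simp add: Bochner_Integration.integral_cong[OF refl assms(5)] Int_absorb2)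
  then show ?thesis
    using W1_law_le_integral[where d = d, OF assms(1-3)] by simp
qed

lemma (in sigma_finite_measure) measure_pair_measure_Times:
  assumes "A \<in> sets N" "B \<in> sets M"
  shows "measure (N \<Otimes>\<^sub>M M) (A \<times> B) = measure N A * measure M B"
  using assms by (simp add: measure_def emeasure_pair_measure_Times enn2real_mult)

lemma measurable_indep_Pair_count_space:
  fixes U :: "'w \<Rightarrow> 'y::countable" and V :: "'w' \<Rightarrow> 'x::countable"
  assumes "U \<in> N \<rightarrow>\<^sub>M count_space UNIV" "V \<in> N' \<rightarrow>\<^sub>M count_space UNIV"
  shows "(\<lambda>w. (U (fst w), V (snd w))) \<in> N \<Otimes>\<^sub>M N' \<rightarrow>\<^sub>M count_space UNIV"
  using assms by (intro measurable_Pair_count_space measurable_compose[OF measurable_fst]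
                    measurable_compose[OF measurable_snd])

lemma (in prob_space) prod_marginals_eq_law:
  assumes "U \<in> M \<rightarrow>\<^sub>M count_space UNIV" "V \<in> M \<rightarrow>\<^sub>M count_space UNIV"
  shows "prod_marginals M U V = law (M \<Otimes>\<^sub>M M) (\<lambda>w. (U (fst w), V (snd w)))"
proof -
  have "{w \<in> space (M \<Otimes>\<^sub>M M). U (fst w) = u \<and> V (snd w) = v}
      = {w \<in> space M. U w = u} \<times> {w \<in> space M. V w = v}" for u v
    by (auto simp: space_pair_measure)
  then show ?thesis
    using sets_fibre[OF assms(1)] sets_fibre[OF assms(2)]
    by (auto simp: prod_marginals_def law_def measure_pair_measure_Times)
qed

lemma sum_powr_abs_onehot_diff:
  fixes x x' :: "'x::finite"
  assumes "0 < p"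
  shows "(\<Sum>k\<in>UNIV. \<bar>onehot x k - onehot x' k\<bar> powr p) = (if x = x' then 0 else 2)"
proof -
  have "\<bar>onehot x k - onehot x' k\<bar> powr p = of_bool (k = x \<and> x \<noteq> x') + of_bool (k = x' \<and> x \<noteq> x')" for k
    using assms by (auto simp: onehot_def)
  then show ?thesis
    by (simp add: sum.distrib)
qed

lemma pair_dist_eq:
  assumes "0 < p"
  shows "pair_dist p z z' =
           (if fst z \<noteq> fst z' \<and> snd z \<noteq> snd z' then 2 powr (1 / p) * 2 powr (1 / p)
            else if z \<noteq> z' then 2 powr (1 / p) else 0)"
proof -
  have "pair_dist p z z' = ((\<Sum>k\<in>UNIV. \<bar>onehot (fst z) k - onehot (fst z') k\<bar> powr p)
                           + (\<Sum>k\<in>UNIV. \<bar>onehot (snd z) k - onehot (snd z') k\<bar> powr p)) powr (1 / p)"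
    unfolding pair_dist_def lp_dist_def lp_norm_def concat_vec_def
    by (simp add: sum.Plus[of UNIV UNIV, simplified] o_def)
  then show ?thesis
    using assms by (auto simp: sum_powr_abs_onehot_diff prod_eq_iff simp flip: powr_mult)
qed

lemma pair_dist_nonneg: "0 < p \<Longrightarrow> 0 \<le> pair_dist p z z'"
  by (simp add: pair_dist_eq)

lemma pair_dist_same_fst: "0 < p \<Longrightarrow> pair_dist p (y, a) (y, b) = (if a = b then 0 else 2 powr (1 / p))"
  by (simp add: pair_dist_eq)

lemma pair_dist_triangle:
  assumes "1 \<le> p"
  shows "pair_dist p x z \<le> pair_dist p x y + pair_dist p y z"
proof -
  define c :: real where "c = 2 powr (1 / p)"
  have "1 \<le> c"
    using assms by (simp add: c_def ge_one_powr_ge_zero)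
  moreover have "c \<le> 2"
    using powr_mono[of "1 / p" 1 2] assms by (simp add: c_def)
  \<comment> \<open>the distances take only the values 0, c and c * c\<close>
  ultimately have "c \<le> c * c" "c * c \<le> c + c"
    by (simp_all add: mult_left_mono[of 1 c c, simplified] mult_right_mono[of c 2 c, simplified])
  with \<open>1 \<le> c\<close> assms show ?thesis
    unfolding pair_dist_eq[OF less_le_trans[OF zero_less_one assms]] c_def[symmetric]
    by (cases x; cases y; cases z) auto
qed

lemma (in finite_measure) W1_pair_law_le_disagreement:
  fixes U :: "'a \<Rightarrow> 'y::finite" and V V' :: "'a \<Rightarrow> 'x::finite"
  assumes "U \<in> M \<rightarrow>\<^sub>M count_space UNIV" "V \<in> M \<rightarrow>\<^sub>M count_space UNIV" "V' \<in> M \<rightarrow>\<^sub>M count_space UNIV"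
    and "0 < p"
  shows "W1 (pair_dist p) (law M (\<lambda>w. (U w, V w))) (law M (\<lambda>w. (U w, V' w)))
           \<le> 2 powr (1 / p) * measure M {w \<in> space M. V w \<noteq> V' w}"
proof (rule W1_law_le_measure)
  show "{w \<in> space M. V w \<noteq> V' w} \<in> sets M"
    using assms(2,3) by measurable
qed (use assms in \<open>auto intro: measurable_Pair_count_space pair_dist_nonneg simp: pair_dist_same_fst\<close>)

lemma (in prob_space) W1_indep_law_le_disagreement:
  fixes U :: "'a \<Rightarrow> 'y::finite" and V V' :: "'a \<Rightarrow> 'x::finite"
  assumes "U \<in> M \<rightarrow>\<^sub>M count_space UNIV" "V \<in> M \<rightarrow>\<^sub>M count_space UNIV" "V' \<in> M \<rightarrow>\<^sub>M count_space UNIV"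
    and "0 < p"
  shows "W1 (pair_dist p) (law (M \<Otimes>\<^sub>M M) (\<lambda>w. (U (fst w), V (snd w))))
                          (law (M \<Otimes>\<^sub>M M) (\<lambda>w. (U (fst w), V' (snd w))))
           \<le> 2 powr (1 / p) * measure M {w \<in> space M. V w \<noteq> V' w}"
proof -
  interpret MM: prob_space "M \<Otimes>\<^sub>M M"
    by (intro prob_space_pair prob_space_axioms)
  have "{w \<in> space (M \<Otimes>\<^sub>M M). V (snd w) \<noteq> V' (snd w)} = space M \<times> {w \<in> space M. V w \<noteq> V' w}"
    by (auto simp: space_pair_measure)
  moreover have "{w \<in> space M. V w \<noteq> V' w} \<in> events"
    using assms(2,3) by measurable
  ultimately show ?thesis
    using MM.W1_pair_law_le_disagreement[of "\<lambda>w. U (fst w)" "\<lambda>w. V (snd w)" "\<lambda>w. V' (snd w)"] assms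
    by (simp add: measurable_compose[OF measurable_fst] measurable_compose[OF measurable_snd]
                  measure_pair_measure_Times prob_space)
qed

lemma (in prob_space) IW_eq_W1_law:
  assumes "U \<in> M \<rightarrow>\<^sub>M count_space UNIV" "V \<in> M \<rightarrow>\<^sub>M count_space UNIV"
  shows "IW p M U V = W1 (pair_dist p) (law M (\<lambda>w. (U w, V w))) (law (M \<Otimes>\<^sub>M M) (\<lambda>w. (U (fst w), V (snd w))))"
  by (simp add: IW_def joint_law_eq_law prod_marginals_eq_law[OF assms])

theorem lemma2:
  fixes M :: "'w measure" and Yh :: "'w \<Rightarrow> 'y::finite"
    and A Ah :: "'w \<Rightarrow> 'a::finite" and p :: real
  assumes "prob_space M"
    and "Yh \<in> M \<rightarrow>\<^sub>M count_space UNIV"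
    and "A \<in> M \<rightarrow>\<^sub>M count_space UNIV"
    and "Ah \<in> M \<rightarrow>\<^sub>M count_space UNIV"
    and "1 \<le> p"
  shows "IW p M Yh A \<le> IW p M Yh Ah
           + 2 * 2 powr (1 / p) * measure M {w \<in> space M. A w \<noteq> Ah w}"
proof -
  interpret prob_space M by fact
  have MM: "prob_space (M \<Otimes>\<^sub>M M)"
    by (intro prob_space_pair assms(1))
  have "0 < p" using assms(5) by simp
  let ?d = "pair_dist p :: 'y \<times> 'a \<Rightarrow> _"
  let ?P = "law M (\<lambda>w. (Yh w, A w))" and ?Q = "law M (\<lambda>w. (Yh w, Ah w))"
    and ?Q' = "law (M \<Otimes>\<^sub>M M) (\<lambda>w. (Yh (fst w), Ah (snd w)))"
    and ?R = "law (M \<Otimes>\<^sub>M M) (\<lambda>w. (Yh (fst w), A (snd w)))"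
  note triangle_prems = assms(1) MM measurable_Pair_count_space measurable_indep_Pair_count_space assms(2-4)
    pair_dist_nonneg[OF \<open>0 < p\<close>] pair_dist_triangle[OF assms(5)]
  have "IW p M Yh A \<le> W1 ?d ?P ?Q + W1 ?d ?Q ?R"
    unfolding IW_eq_W1_law[OF assms(2,3)] by (intro W1_law_triangle triangle_prems)
  moreover have "W1 ?d ?Q ?R \<le> IW p M Yh Ah + W1 ?d ?Q' ?R"
    unfolding IW_eq_W1_law[OF assms(2,4)] by (intro W1_law_triangle triangle_prems)
  moreover have "W1 ?d ?P ?Q \<le> 2 powr (1 / p) * measure M {w \<in> space M. A w \<noteq> Ah w}"
    by (intro W1_pair_law_le_disagreement assms(2-4) \<open>0 < p\<close>)
  moreover have "W1 ?d ?Q' ?R \<le> 2 powr (1 / p) * measure M {w \<in> space M. A w \<noteq> Ah w}"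
    using W1_indep_law_le_disagreement[OF assms(2,4,3) \<open>0 < p\<close>] by (simp add: eq_commute)
  ultimately show ?thesis
    by linarith
qed

end
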